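(* Under the standing assumptions below, for any finite partitions $\mathcal P_1,\mathcal P_2$ of $\lambda$, $I(\mathcal P_1\sqcap\mathcal P_2)=I(\mathcal P_1)\cap I(\mathcal P_2)$.
   Context: Standing assumptions: $G$ is a finite graph with at least one edge which is trivially power-colorable (for every positive integer $n$, every $\chi(G)$-coloring of $G^n$ is of the form $v\mapsto\phi(v_i)$ for some coordinate $i$ and proper coloring $\phi$ of $G$), $k=\chi(G)$, $\lambda$ is an infinite cardinal, and $\Phi$ is a fixed proper $k$-coloring of $G^\lambda$ (vertex set $V(G)^\lambda$, $(v_\xi)$ adjacent to $(w_\xi)$ iff $v_\xi w_\xi\in E(G)$ for all $\xi<\lambda$). A finite partition of $\lambda$ is a partition of $\lambda$ into finitely many nonempty pieces. For a finite partition $\mathcal P$, $V_{\mathcal P}=\{\mathbf v\in V(G^\lambda): \mathbf v\restriction A \text{ is constant for each } A\in\mathcal P\}$, and for $\mathbf v\in V_{\mathcal P}$, $A\in\mathcal P$, $\mathbf v_A$ is the constant value of $\mathbf v$ on $A$. If $\mathcal P=\{A_1,\dots,A_n\}$, the induced subgraph on $V_{\mathcal P}$ is isomorphic to $G^n$ via $\mathbf v\mapsto(\mathbf v_{A_1},\dots,\mathbf v_{A_n})$, so there are $i$ and a proper coloring $\phi$ of $G$ with $\Phi(\mathbf v)=\phi(\mathbf v_{A_i})$ for all $\mathbf v\in V_{\mathcal P}$; since $G$ has an edge, $A_i$ is uniquely determined and is denoted $I(\mathcal P)$. The greatest common refinement is $\mathcal P_1\sqcap\mathcal P_2=\{A\cap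 B: A\in\mathcal P_1, B\in\mathcal P_2, A\cap B\ne\emptyset\}$. *)

theory Defs
  imports Main "HOL-Library.FuncSet" "HOL-Library.Disjoint_Sets"
begin

definition simple_graph :: "('v \<Rightarrow> 'v \<Rightarrow> bool) \<Rightarrow> bool" where
  "simple_graph E \<longleftrightarrow> (\<forall>x y. E x y \<longrightarrow> E y x) \<and> (\<forall>x. \<not> E x x)"

definition proper_col :: "('v \<Rightarrow> 'v \<Rightarrow> bool) \<Rightarrow> ('v \<Rightarrow> 'c) \<Rightarrow> bool" where
  "proper_col E \<phi> \<longleftrightarrow> (\<forall>x y. E x y \<longrightarrow> \<phi> x \<noteq> \<phi> y)"

definition chromatic_number :: "('v \<Rightarrow> 'v \<Rightarrow> bool) \<Rightarrow> nat" where
  "chromatic_number E = (LEAST k. \<exists>\<phi>::'v \<Rightarrow> nat. proper_col E \<phi> \<and> (\<forall>x. \<phi> x < k))"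

definition pow_verts :: "nat \<Rightarrow> (nat \<Rightarrow> 'v) set" where
  "pow_verts n = PiE {..<n} (\<lambda>_. UNIV)"

definition pow_adj :: "('v \<Rightarrow> 'v \<Rightarrow> bool) \<Rightarrow> 'i set \<Rightarrow> ('i \<Rightarrow> 'v) \<Rightarrow> ('i \<Rightarrow> 'v) \<Rightarrow> bool" where
  "pow_adj E S v w \<longleftrightarrow> (\<forall>i\<in>S. E (v i) (w i))"

definition pow_k_coloring :: "('v \<Rightarrow> 'v \<Rightarrow> bool) \<Rightarrow> nat \<Rightarrow> nat \<Rightarrow> ((nat \<Rightarrow> 'v) \<Rightarrow> nat) \<Rightarrow> bool" where
  "pow_k_coloring E n k c \<longleftrightarrow>
     (\<forall>v\<in>pow_verts n. c v < k) \<and>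
     (\<forall>v\<in>pow_verts n. \<forall>w\<in>pow_verts n. pow_adj E {..<n} v w \<longrightarrow> c v \<noteq> c w)"

definition trivially_power_colorable :: "('v \<Rightarrow> 'v \<Rightarrow> bool) \<Rightarrow> bool" where
  "trivially_power_colorable E \<longleftrightarrow>
     (\<forall>n>0. \<forall>c. pow_k_coloring E n (chromatic_number E) c \<longrightarrow>
        (\<exists>i<n. \<exists>\<phi>::'v \<Rightarrow> nat. proper_col E \<phi> \<and> (\<forall>v\<in>pow_verts n. c v = \<phi> (v i))))"

(* a proper k-colouring of G^lambda, lambda = UNIV :: 'i set *)
definition big_k_coloring :: "('v \<Rightarrow> 'v \<Rightarrow> bool) \<Rightarrow> nat \<Rightarrow> (('i \<Rightarrow> 'v) \<Rightarrow> nat) \<Rightarrow> bool" where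
  "big_k_coloring E k \<Phi> \<longleftrightarrow> (\<forall>v. \<Phi> v < k) \<and> (\<forall>v w. pow_adj E UNIV v w \<longrightarrow> \<Phi> v \<noteq> \<Phi> w)"

definition finite_partition :: "'i set set \<Rightarrow> bool" where
  "finite_partition P \<longleftrightarrow> finite P \<and> partition_on UNIV P"

definition V_part :: "'i set set \<Rightarrow> ('i \<Rightarrow> 'v) set" where
  "V_part P = {v. \<forall>A\<in>P. \<forall>a\<in>A. \<forall>b\<in>A. v a = v b}"

definition is_I :: "('v \<Rightarrow> 'v \<Rightarrow> bool) \<Rightarrow> (('i \<Rightarrow> 'v) \<Rightarrow> nat) \<Rightarrow> 'i set set \<Rightarrow> 'i set \<Rightarrow> bool" where
  "is_I E \<Phi> P A \<longleftrightarrow> A \<in> P \<and>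
     (\<exists>\<phi>::'v \<Rightarrow> nat. proper_col E \<phi> \<and> (\<forall>v\<in>V_part P. \<forall>a\<in>A. \<Phi> v = \<phi> (v a)))"

definition I_part :: "('v \<Rightarrow> 'v \<Rightarrow> bool) \<Rightarrow> (('i \<Rightarrow> 'v) \<Rightarrow> nat) \<Rightarrow> 'i set set \<Rightarrow> 'i set" where
  "I_part E \<Phi> P = (THE A. is_I E \<Phi> P A)"

definition meet_part :: "'i set set \<Rightarrow> 'i set set \<Rightarrow> 'i set set" where
  "meet_part P1 P2 = {A \<inter> B | A B. A \<in> P1 \<and> B \<in> P2 \<and> A \<inter> B \<noteq> {}}"

end

theory Submission
  imports Defs
begin

text \<open>
  The induced subgraph on \<open>V\<^sub>\<P>\<close> is a copy of \<open>G\<^sup>n\<close>, so trivial power-colourability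
  makes \<open>\<Phi>\<close> read the colour of \<open>v \<in> V\<^sub>\<P>\<close> off a single piece through a proper colouring of \<open>G\<close>.
  The reading piece is unique: for an edge \<open>xy\<close> and another piece \<open>B\<close>, the vertex equal to \<open>y\<close>
  on \<open>B\<close> and to \<open>x\<close> elsewhere gets the colour of the constant vertex \<open>x\<close> from one reading but
  not from the other.  As \<open>V\<^sub>\<P>\<^sub>1 \<subseteq> V\<^sub>\<Q>\<close> for \<open>\<Q> = \<P>\<^sub>1 \<sqinter> \<P>\<^sub>2\<close>, the reading through
  \<open>I(\<Q>) = A \<inter> B\<close> (\<open>A \<in> \<P>\<^sub>1\<close>, \<open>B \<in> \<P>\<^sub>2\<close>) is also a reading through \<open>A\<close> on \<open>V\<^sub>\<P>\<^sub>1\<close>, whence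
  \<open>A = I(\<P>\<^sub>1)\<close>; likewise \<open>B = I(\<P>\<^sub>2)\<close>.
\<close>

lemma meet_part_eq_common_refinement:
  assumes "disjoint P1"
  shows "meet_part P1 P2 = common_refinement {P1, P2}"
proof (rule set_eqI)
  fix X
  show "X \<in> meet_part P1 P2 \<longleftrightarrow> X \<in> common_refinement {P1, P2}"
  proof
    assume "X \<in> meet_part P1 P2"
    then obtain A B where X: "X = A \<inter> B" "A \<in> P1" "B \<in> P2" "A \<inter> B \<noteq> {}"
      by (auto simp: meet_part_def)
    define f where "f P = (if P = P1 then A else B)" for P
    have "P1 = P2 \<Longrightarrow> A = B"
      using X assms by (auto dest: disjointD)
    then have "X = \<Inter> (f ` {P1, P2})"
      using X by (auto simp: f_def)
    moreover have "f \<in> (\<Pi> P\<in>{P1, P2}. P)"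
      using X by (auto simp: f_def)
    ultimately show "X \<in> common_refinement {P1, P2}"
      using X by (auto simp: common_refinement)
  next
    assume "X \<in> common_refinement {P1, P2}"
    then show "X \<in> meet_part P1 P2"
      by (auto simp: common_refinement meet_part_def)
  qed
qed

lemma finite_partition_meet_part:
  assumes "finite_partition P1" "finite_partition P2"
  shows "finite_partition (meet_part P1 P2)"
proof -
  have "meet_part P1 P2 = common_refinement {P1, P2}"
    using assms meet_part_eq_common_refinement partition_onD2
    unfolding finite_partition_def by blast
  with assms show ?thesis
    unfolding finite_partition_def
    by (auto intro: partition_on_common_refinement finite_common_refinement)
qed

lemma refines_meet_part:
  assumes "partition_on UNIV P1" "partition_on UNIV P2"
  shows "refines UNIV (meet_part P1 P2) P1" "refines UNIV (meet_part P1 P2) P2"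
  using assms refines_common_refinement[of "{P1, P2}" UNIV]
  by (auto simp: meet_part_eq_common_refinement partition_onD2)

lemma V_part_refines:
  assumes "refines S Q P"
  shows "V_part P \<subseteq> V_part Q"
  using assms unfolding refines_def V_part_def by blast

lemma V_part_const: "(\<lambda>_. x) \<in> V_part P"
  by (simp add: V_part_def)

lemma V_part_indicator:
  assumes "disjoint P" "B \<in> P"
  shows "(\<lambda>i. if i \<in> B then y else x) \<in> V_part P"
  unfolding V_part_def
proof (intro CollectI ballI)
  fix D a b assume "D \<in> P" "a \<in> D" "b \<in> D"
  with assms have "D = B \<or> D \<inter> B = {}"
    by (auto dest: disjointD)
  with \<open>a \<in> D\<close> \<open>b \<in> D\<close> show "(if a \<in> B then y else x) = (if b \<in> B then y else x)"
    by auto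
qed

lemma reading_piece_unique:
  assumes P: "disjoint P" "{} \<notin> P" and "A \<in> P" "B \<in> P"
    and C: "C \<subseteq> A" "c \<in> C"
    and "E x y" "proper_col E \<psi>"
    and read_C: "\<forall>v\<in>V_part P. \<forall>c\<in>C. \<Phi> v = \<phi> (v c)"
    and read_B: "\<forall>v\<in>V_part P. \<forall>b\<in>B. \<Phi> v = \<psi> (v b)"
  shows "A = B"
proof (rule ccontr)
  assume "A \<noteq> B"
  then have "c \<notin> B"
    using P \<open>A \<in> P\<close> \<open>B \<in> P\<close> C by (auto dest: disjointD)
  obtain b where "b \<in> B"
    using P \<open>B \<in> P\<close> by (metis all_not_in_conv)
  define w where "w i = (if i \<in> B then y else x)" for i
  have "w \<in> V_part P"
    unfolding w_def by (rule V_part_indicator[OF P(1) \<open>B \<in> P\<close>])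
  have "\<psi> x = \<Phi> (\<lambda>_. x)"
    using read_B V_part_const \<open>b \<in> B\<close> by metis
  also have "\<dots> = \<phi> x"
    using read_C V_part_const C by metis
  also have "\<dots> = \<Phi> w"
    using read_C \<open>w \<in> V_part P\<close> C \<open>c \<notin> B\<close> by (simp add: w_def)
  also have "\<dots> = \<psi> y"
    using read_B \<open>w \<in> V_part P\<close> \<open>b \<in> B\<close> by (simp add: w_def)
  finally show False
    using \<open>E x y\<close> \<open>proper_col E \<psi>\<close> by (simp add: proper_col_def)
qed

lemma pow_k_coloring_pullback:
  assumes "big_k_coloring E k \<Phi>" "\<And>i. idx i < n"
  shows "pow_k_coloring E n k (\<lambda>u. \<Phi> (u \<circ> idx))"
  using assms unfolding pow_k_coloring_def big_k_coloring_def pow_adj_def by auto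

lemma V_part_factor:
  assumes "v \<in> V_part P" "\<And>i. f (idx i) \<in> P" "\<And>i. i \<in> f (idx i)"
  shows "v = (\<lambda>j. v (SOME a. a \<in> f j)) \<circ> idx"
proof
  fix i
  have "(SOME a. a \<in> f (idx i)) \<in> f (idx i)"
    using assms(3) by (rule someI)
  then show "v i = ((\<lambda>j. v (SOME a. a \<in> f j)) \<circ> idx) i"
    using assms unfolding V_part_def by auto
qed

lemma V_part_reading_from_power:
  assumes read: "\<forall>u\<in>pow_verts n. \<Phi> (u \<circ> idx) = \<phi> (u i)"
    and f: "f ` {..<n} = P" and idx: "\<And>k. idx k < n \<and> k \<in> f (idx k)"
    and "i < n" "v \<in> V_part P" "a \<in> f i"
  shows "\<Phi> v = \<phi> (v a)"
proof -
  define u where "u = restrict (\<lambda>j. v (SOME a. a \<in> f j)) {..<n}"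
  have "v = (\<lambda>j. v (SOME a. a \<in> f j)) \<circ> idx"
    using V_part_factor[OF \<open>v \<in> V_part P\<close>, of f idx] f idx by blast
  also have "\<dots> = u \<circ> idx"
    using idx by (simp add: u_def fun_eq_iff)
  finally have "v = u \<circ> idx" .
  have "(SOME a. a \<in> f i) \<in> f i"
    using \<open>a \<in> f i\<close> by (rule someI)
  moreover have "f i \<in> P"
    using f \<open>i < n\<close> by blast
  ultimately have "v (SOME a. a \<in> f i) = v a"
    using \<open>v \<in> V_part P\<close> \<open>a \<in> f i\<close> unfolding V_part_def by blast
  then have "u i = v a"
    using \<open>i < n\<close> by (simp add: u_def)
  moreover have "u \<in> pow_verts n"
    by (simp add: u_def pow_verts_def)
  ultimately show ?thesis
    using read \<open>v = u \<circ> idx\<close> by metis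
qed

context
  fixes E :: "'v \<Rightarrow> 'v \<Rightarrow> bool" and \<Phi> :: "('i \<Rightarrow> 'v) \<Rightarrow> nat" and x y :: 'v
  assumes tpc: "trivially_power_colorable E"
    and edge: "E x y"
    and \<Phi>: "big_k_coloring E (chromatic_number E) \<Phi>"
begin

lemma is_I_exists:
  assumes "finite_partition P"
  shows "\<exists>A. is_I E \<Phi> P A"
proof -
  define n where "n = card P"
  obtain f where f: "f ` {..<n} = P"
    using ex_bij_betw_nat_finite[of P] assms
    by (auto simp: n_def finite_partition_def bij_betw_def atLeast0LessThan)
  define idx where "idx i = (SOME j. j < n \<and> i \<in> f j)" for i
  have "\<exists>j<n. i \<in> f j" for i
    using assms partition_onD1[of UNIV P] f unfolding finite_partition_def by blast
  then have idx: "idx i < n \<and> i \<in> f (idx i)" for i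
    unfolding idx_def by (metis (mono_tags, lifting) someI_ex)
  have "0 < n"
    using idx[of undefined] by auto
  moreover have "pow_k_coloring E n (chromatic_number E) (\<lambda>u. \<Phi> (u \<circ> idx))"
    using pow_k_coloring_pullback[OF \<Phi>] idx by blast
  ultimately obtain i \<phi> where "i < n" "proper_col E \<phi>"
    and read: "\<forall>u\<in>pow_verts n. \<Phi> (u \<circ> idx) = \<phi> (u i)"
    using tpc[unfolded trivially_power_colorable_def, rule_format] by blast
  have "\<Phi> v = \<phi> (v a)" if "v \<in> V_part P" "a \<in> f i" for v a
    by (rule V_part_reading_from_power[OF read f idx \<open>i < n\<close> that])
  then have "is_I E \<Phi> P (f i)"
    using \<open>i < n\<close> f \<open>proper_col E \<phi>\<close> unfolding is_I_def by blast
  then show ?thesis ..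
qed

lemma is_I_unique:
  assumes "finite_partition P" "is_I E \<Phi> P A" "is_I E \<Phi> P B"
  shows "A = B"
proof -
  have P: "disjoint P" "{} \<notin> P"
    using assms(1) by (auto simp: finite_partition_def partition_on_def)
  obtain \<phi> where "A \<in> P" and read_A: "\<forall>v\<in>V_part P. \<forall>a\<in>A. \<Phi> v = \<phi> (v a)"
    using assms(2) by (auto simp: is_I_def)
  obtain \<psi> where "B \<in> P" "proper_col E \<psi>" and read_B: "\<forall>v\<in>V_part P. \<forall>b\<in>B. \<Phi> v = \<psi> (v b)"
    using assms(3) by (auto simp: is_I_def)
  obtain a where "a \<in> A"
    using P \<open>A \<in> P\<close> by (metis all_not_in_conv)
  show ?thesis
    by (rule reading_piece_unique[OF P \<open>A \<in> P\<close> \<open>B \<in> P\<close> order_refl \<open>a \<in> A\<close> edge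
          \<open>proper_col E \<psi>\<close> read_A read_B])
qed

text \<open>\<open>I_part\<close> is defined by \<open>THE\<close>, so it is meaningful only once unique existence is known.\<close>

lemma is_I_I_part:
  assumes "finite_partition P"
  shows "is_I E \<Phi> P (I_part E \<Phi> P)"
  using is_I_exists[OF assms] is_I_unique[OF assms] unfolding I_part_def by (metis theI)

lemma I_part_eq_if_refines:
  assumes fin: "finite_partition P" "finite_partition Q" and "refines UNIV Q P"
    and "I_part E \<Phi> Q \<subseteq> A" "A \<in> P"
  shows "A = I_part E \<Phi> P"
proof -
  have P: "disjoint P" "{} \<notin> P"
    using fin(1) by (auto simp: finite_partition_def partition_on_def)
  obtain \<phi> where "I_part E \<Phi> Q \<in> Q"
    and "\<forall>v\<in>V_part Q. \<forall>c\<in>I_part E \<Phi> Q. \<Phi> v = \<phi> (v c)"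
    using is_I_I_part[OF fin(2)] by (auto simp: is_I_def)
  then have read_Q: "\<forall>v\<in>V_part P. \<forall>c\<in>I_part E \<Phi> Q. \<Phi> v = \<phi> (v c)"
    using V_part_refines[OF \<open>refines UNIV Q P\<close>] by blast
  obtain c where "c \<in> I_part E \<Phi> Q"
    using \<open>I_part E \<Phi> Q \<in> Q\<close> fin(2) unfolding finite_partition_def
    by (metis all_not_in_conv partition_onD3)
  obtain \<psi> where "I_part E \<Phi> P \<in> P" "proper_col E \<psi>"
    and read_P: "\<forall>v\<in>V_part P. \<forall>b\<in>I_part E \<Phi> P. \<Phi> v = \<psi> (v b)"
    using is_I_I_part[OF fin(1)] by (auto simp: is_I_def)
  show ?thesis
    by (rule reading_piece_unique[OF P \<open>A \<in> P\<close> \<open>I_part E \<Phi> P \<in> P\<close> assms(4)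
          \<open>c \<in> I_part E \<Phi> Q\<close> edge \<open>proper_col E \<psi>\<close> read_Q read_P])
qed

end

theorem mainTheorem17:
  fixes E :: "'v::finite \<Rightarrow> 'v \<Rightarrow> bool"
    and \<Phi> :: "('i \<Rightarrow> 'v) \<Rightarrow> nat"
    and P1 P2 :: "'i set set"
  assumes "simple_graph E"
    and "\<exists>x y. E x y"
    and "trivially_power_colorable E"
    and "infinite (UNIV :: 'i set)"
    and "big_k_coloring E (chromatic_number E) \<Phi>"
    and "finite_partition P1"
    and "finite_partition P2"
  shows "I_part E \<Phi> (meet_part P1 P2) = I_part E \<Phi> P1 \<inter> I_part E \<Phi> P2"
proof -
  obtain x y where edge: "E x y"
    using assms(2) by blast
  define Q where "Q = meet_part P1 P2"
  have Q: "finite_partition Q"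
    using finite_partition_meet_part[OF assms(6,7)] by (simp add: Q_def)
  have "I_part E \<Phi> Q \<in> Q"
    using is_I_I_part[OF assms(3) edge assms(5) Q] by (simp add: is_I_def)
  then obtain A B where AB: "I_part E \<Phi> Q = A \<inter> B" "A \<in> P1" "B \<in> P2"
    by (auto simp: Q_def meet_part_def)
  have "refines UNIV Q P1" "refines UNIV Q P2"
    using refines_meet_part assms(6,7) by (auto simp: Q_def finite_partition_def)
  then have "A = I_part E \<Phi> P1" "B = I_part E \<Phi> P2"
    using I_part_eq_if_refines[OF assms(3) edge assms(5)] assms(6,7) Q AB by auto
  with AB show ?thesis
    by (simp add: Q_def)
qed

end
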